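(* For all terms $s,t$, $(\gamma s)^0_{\gamma t}=\gamma(s^0_t)$, where on the left is program substitution and on the right term substitution.
   Context: Terms (de Bruijn): $s::=n\mid st\mid\lambda s$, $n\in\mathbb N$. Term substitution: $k^k_u=u$, $n^k_u=n$ for $n\ne k$, $(st)^k_u=(s^k_u)(t^k_u)$, $(\lambda s)^k_u=\lambda(s^{k+1}_u)$. Commands are $\mathsf{ret}$, $\mathsf{var}\,n$, $\mathsf{lam}$, $\mathsf{app}$; programs are finite lists of commands. Compilation: $\gamma n=[\mathsf{var}\,n]$, $\gamma(st)=\gamma s++\gamma t++[\mathsf{app}]$, $\gamma(\lambda s)=\mathsf{lam}::\gamma s++[\mathsf{ret}]$. Program substitution $P^k_Q$: $(\mathsf{var}\,k::P)^k_Q=Q++P^k_Q$; $(\mathsf{var}\,n::P)^k_Q=\mathsf{var}\,n::P^k_Q$ for $n\ne k$; $(\mathsf{lam}::P)^k_Q=\mathsf{lam}::P^{k+1}_Q$; $(\mathsf{app}::P)^k_Q=\mathsf{app}::P^k_Q$; $(\mathsf{ret}::P)^0_Q=[\mathsf{ret}]$; $(\mathsf{ret}::P)^{k+1}_Q=\mathsf{ret}::P^k_Q$; $[]^k_Q=[]$. *)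

theory Defs
  imports Main
begin

datatype tm = Var nat | App tm tm | Lam tm

fun subst :: "tm \<Rightarrow> nat \<Rightarrow> tm \<Rightarrow> tm" where
  "subst (Var n) k u = (if n = k then u else Var n)"
| "subst (App s t) k u = App (subst s k u) (subst t k u)"
| "subst (Lam s) k u = Lam (subst s (Suc k) u)"

datatype cmd = ret | var nat | lam | app

type_synonym prog = "cmd list"

fun gamma :: "tm \<Rightarrow> prog" where
  "gamma (Var n) = [var n]"
| "gamma (App s t) = gamma s @ gamma t @ [app]"
| "gamma (Lam s) = lam # gamma s @ [ret]"

fun psubst :: "prog \<Rightarrow> nat \<Rightarrow> prog \<Rightarrow> prog" where
  "psubst [] k Q = []"
| "psubst (var n # P) k Q = (if n = k then Q @ psubst P k Q else var n # psubst P k Q)"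
| "psubst (lam # P) k Q = lam # psubst P (Suc k) Q"
| "psubst (app # P) k Q = app # psubst P k Q"
| "psubst (ret # P) 0 Q = [ret]"
| "psubst (ret # P) (Suc k) Q = ret # psubst P k Q"

end

theory Submission
  imports Defs
begin

(* Program substitution is not compositional on its own: a ret at depth 0 discards the rest of
   the program. The induction therefore carries an arbitrary continuation P; since the code of a
   term is balanced (every lam is closed by its own ret), substitution never reaches a ret at
   depth 0 inside it and passes on to P at the depth it started with. *)

lemma psubst_gamma_append:
  "psubst (gamma s @ P) k (gamma u) = gamma (subst s k u) @ psubst P k (gamma u)"
  by (induction s arbitrary: k P) auto

theorem lemma11:
  fixes s t :: tm
  shows "psubst (gamma s) 0 (gamma t) = gamma (subst s 0 t)"
  using psubst_gamma_append[of s "[]" 0 t] by simp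

end
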